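(* Let $r$ be a positive integer and let $(P,\mathcal{L})$ be an intersecting linear system of rank $r$ satisfying $\tau(P,\mathcal{L})=\nu_2(P,\mathcal{L})=r$. Then $(P,\mathcal{L})$ is $r$-uniform, i.e., every line has exactly $r$ points.
   Context: A linear system is a pair $(P,\mathcal{L})$ with $P$ a finite set of points and $\mathcal{L}$ a family of subsets of $P$ (lines) such that any two distinct lines share at most one point; it is intersecting if any two distinct lines share exactly one point. The rank is the maximum cardinality of a line. A transversal is a set of points meeting every line; $\tau$ is the minimum size of a transversal. A 2-packing is a set of lines no three of which share a common point; $\nu_2$ is its maximum size. *)

theory Defs
  imports Main
begin

definition linear_system :: "'a set \<Rightarrow> 'a set set \<Rightarrow> bool" where
  "linear_system P L \<longleftrightarrow> finite P \<and> (\<forall>l\<in>L. l \<subseteq> P) \<and>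
     (\<forall>l\<in>L. \<forall>m\<in>L. l \<noteq> m \<longrightarrow> card (l \<inter> m) \<le> 1)"

definition intersecting :: "'a set \<Rightarrow> 'a set set \<Rightarrow> bool" where
  "intersecting P L \<longleftrightarrow> linear_system P L \<and>
     (\<forall>l\<in>L. \<forall>m\<in>L. l \<noteq> m \<longrightarrow> card (l \<inter> m) = 1)"

definition rank :: "'a set set \<Rightarrow> nat" where
  "rank L = Max (card ` L)"

definition transversal :: "'a set \<Rightarrow> 'a set set \<Rightarrow> 'a set \<Rightarrow> bool" where
  "transversal P L T \<longleftrightarrow> T \<subseteq> P \<and> (\<forall>l\<in>L. T \<inter> l \<noteq> {})"

definition tau :: "'a set \<Rightarrow> 'a set set \<Rightarrow> nat" where
  "tau P L = Min {card T | T. transversal P L T}"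

definition two_packing :: "'a set set \<Rightarrow> 'a set set \<Rightarrow> bool" where
  "two_packing L S \<longleftrightarrow> S \<subseteq> L \<and>
     (\<forall>a\<in>S. \<forall>b\<in>S. \<forall>c\<in>S. a \<noteq> b \<and> a \<noteq> c \<and> b \<noteq> c \<longrightarrow> a \<inter> b \<inter> c = {})"

definition nu2 :: "'a set set \<Rightarrow> nat" where
  "nu2 L = Max {card S | S. two_packing L S}"

end

theory Submission
  imports Defs
begin

text \<open>In an intersecting system every nonempty line meets all lines, so it is a transversal
  and has at least \<open>\<tau> = r\<close> points; by the rank it has at most \<open>r\<close>.\<close>

lemma linear_system_finite_lines:
  assumes "linear_system P L"
  shows "finite L"
proof (rule finite_subset)
  show "L \<subseteq> Pow P" using assms unfolding linear_system_def by blast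
  show "finite (Pow P)" using assms unfolding linear_system_def by simp
qed

lemma card_line_le_rank:
  assumes "finite L" and "l \<in> L"
  shows "card l \<le> rank L"
  using assms unfolding rank_def by simp

lemma tau_le_card_transversal:
  assumes "linear_system P L" and "transversal P L T"
  shows "tau P L \<le> card T"
proof -
  have "{card T | T. transversal P L T} \<subseteq> card ` Pow P"
    unfolding transversal_def by auto
  then have "finite {card T | T. transversal P L T}"
    using assms(1) unfolding linear_system_def by (meson finite_Pow_iff finite_imageI finite_subset)
  with assms(2) show ?thesis
    unfolding tau_def by (auto intro: Min_le)
qed

lemma intersecting_empty_line:
  assumes "intersecting P L" and "{} \<in> L"
  shows "L = {{}}"
proof -
  have "m = {}" if "m \<in> L" for m
  proof (rule ccontr)
    assume "m \<noteq> {}"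
    then have "card ({} \<inter> m) = 1"
      using assms that unfolding intersecting_def by blast
    then show False by simp
  qed
  with assms(2) show ?thesis by blast
qed

lemma intersecting_line_transversal:
  assumes "intersecting P L" and "l \<in> L" and "l \<noteq> {}"
  shows "transversal P L l"
  unfolding transversal_def
proof (intro conjI ballI)
  show "l \<subseteq> P" using assms(1,2) unfolding intersecting_def linear_system_def by blast
next
  fix m assume "m \<in> L"
  show "l \<inter> m \<noteq> {}"
  proof (cases "m = l")
    case False
    then have "card (l \<inter> m) = 1"
      using assms(1,2) \<open>m \<in> L\<close> unfolding intersecting_def by blast
    then show ?thesis by auto
  qed (use assms(3) in simp)
qed

lemma intersecting_tau_le_card_line:
  assumes "intersecting P L" and "rank L > 0" and "l \<in> L"
  shows "tau P L \<le> card l"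
proof -
  have "l \<noteq> {}"
  proof
    assume "l = {}"
    then have "L = {{}}" using assms(1,3) intersecting_empty_line by blast
    then show False using assms(2) unfolding rank_def by simp
  qed
  with assms(1,3) have "transversal P L l"
    by (rule intersecting_line_transversal)
  with assms(1) show ?thesis
    unfolding intersecting_def by (blast intro: tau_le_card_transversal)
qed

theorem lemma4p1:
  fixes P :: "'a set" and L :: "'a set set" and r :: nat
  assumes "r > 0"
    and "intersecting P L"
    and "rank L = r"
    and "tau P L = r"
    and "nu2 L = r"
  shows "\<forall>l\<in>L. card l = r"
proof
  fix l assume "l \<in> L"
  have "finite L"
    using assms(2) linear_system_finite_lines unfolding intersecting_def by blast
  with \<open>l \<in> L\<close> have "card l \<le> r"
    using assms(3) card_line_le_rank by blast
  moreover have "r \<le> card l"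
    using assms(1-4) \<open>l \<in> L\<close> intersecting_tau_le_card_line by metis
  ultimately show "card l = r" by simp
qed

end
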